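(* For every integer $n\geq 3$ and every nonzero cardinal number $\beta\leq 2^{\aleph_0}$, there is a partition of $\mathbb{R}^n$ into exactly $\beta$ pairwise disjoint nonempty subsets, each of which is arcwise connected and dense in $\mathbb{R}^n$.
   Context: $\mathbb{R}^n$ carries its usual Euclidean topology. *)

theory Defs
  imports "HOL-Analysis.Analysis" "HOL-Library.Equipollence"
begin

definition arcwise_connected :: "'a::topological_space set \<Rightarrow> bool" where
  "arcwise_connected S \<longleftrightarrow>
     (\<forall>x\<in>S. \<forall>y\<in>S. x \<noteq> y \<longrightarrow>
        (\<exists>g. arc g \<and> path_image g \<subseteq> S \<and> pathstart g = x \<and> pathfinish g = y))"

end

theory Submission
  imports Defs
begin

text \<open>
  Pick a function \<open>d : \<real> \<rightarrow> \<real>\<close> with \<open>d 0 = 0\<close> whose graph is dense in \<open>\<real>\<^sup>2\<close>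
  (for an irrational \<open>a\<close>, send \<open>u + a r\<close> with \<open>u, r \<in> \<rat>\<close> to \<open>r\<close>).  Using three
  coordinates \<open>x, y, z\<close> of \<open>\<real>\<^sup>n\<close>, put \<open>\<phi>(p) = z - h(x, y)\<close> where
  \<open>h(x, y) = y d(x)\<close> for \<open>y \<le> 0\<close> and \<open>h(x, y) = (y - 1) d(x)\<close> for \<open>y > 0\<close>.
  Every level set \<open>\<phi>\<^sup>-\<^sup>1(t)\<close> is dense (the graph of \<open>d\<close> is dense and \<open>y\<close> may be
  chosen with \<open>h(\<cdot>, y)\<close> a nonzero multiple of \<open>d\<close>) and path connected (it is
  made of convex sheets glued along the convex slices \<open>y = 0\<close>, \<open>y = 1\<close> and
  \<open>x = 0\<close>).  Moreover \<open>\<phi>\<^sup>-\<^sup>1(A)\<close> is path connected whenever \<open>[0, \<infinity>) \<subseteq> A\<close>.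
  Finally \<open>\<real>\<close> is split into \<open>\<beta>\<close> blocks, each a singleton or containing
  \<open>[0, \<infinity>)\<close>; their preimages under \<open>\<phi>\<close> form the required partition, since
  path connected subsets of \<open>\<real>\<^sup>n\<close> are arcwise connected.
\<close>

definition dense_graph :: "(real \<Rightarrow> real) \<Rightarrow> bool" where
  "dense_graph d \<longleftrightarrow> (\<forall>x w e. e > 0 \<longrightarrow> (\<exists>x'. \<bar>x' - x\<bar> < e \<and> \<bar>d x' - w\<bar> < e))"

lemma dense_graphD:
  "dense_graph d \<Longrightarrow> e > 0 \<Longrightarrow> \<exists>x'. \<bar>x' - x\<bar> < e \<and> \<bar>d x' - w\<bar> < e"
  unfolding dense_graph_def by blast

lemma irrational_exists: "\<exists>a::real. a \<notin> \<rat>"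
  using uncountable_UNIV_real countable_rat by (metis UNIV_eq_I)

lemma rational_coefficient_unique:
  fixes a x r s :: real
  assumes a: "a \<notin> \<rat>" and rs: "r \<in> \<rat>" "s \<in> \<rat>"
    and "x - a * r \<in> \<rat>" "x - a * s \<in> \<rat>"
  shows "r = s"
proof (rule ccontr)
  assume "r \<noteq> s"
  have "a * (r - s) \<in> \<rat>"
    using Rats_diff[OF assms(5,4)] by (simp add: algebra_simps)
  then have "a * (r - s) / (r - s) \<in> \<rat>"
    using rs by (intro Rats_divide Rats_diff)
  then show False using a \<open>r \<noteq> s\<close> by simp
qed

definition rat_coeff :: "real \<Rightarrow> real \<Rightarrow> real" where
  "rat_coeff a x = (if \<exists>r\<in>\<rat>. x - a * r \<in> \<rat> then THE r. r \<in> \<rat> \<and> x - a * r \<in> \<rat> else 0)"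

lemma rat_coeff_eq:
  assumes "a \<notin> \<rat>" "u \<in> \<rat>" "r \<in> \<rat>"
  shows "rat_coeff a (u + a * r) = r"
proof -
  have "(THE s. s \<in> \<rat> \<and> u + a * r - a * s \<in> \<rat>) = r"
    using assms rational_coefficient_unique[OF assms(1)] by (intro the_equality) auto
  then show ?thesis using assms by (auto simp: rat_coeff_def)
qed

lemma rat_coeff_0: "a \<notin> \<rat> \<Longrightarrow> rat_coeff a 0 = 0"
  using rat_coeff_eq[of a 0 0] by simp

(* Near any (x, w): take r \<in> \<rat> close to w, then u \<in> \<rat> with u + a r close to x. *)
lemma dense_graph_rat_coeff:
  assumes a: "a \<notin> \<rat>"
  shows "dense_graph (rat_coeff a)"
  unfolding dense_graph_def
proof (intro allI impI)
  fix x w e :: real assume e: "e > 0"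
  obtain r where r: "r \<in> \<rat>" "w < r" "r < w + e"
    using Rats_dense_in_real[of w "w + e"] e by auto
  obtain u where u: "u \<in> \<rat>" "x - a * r < u" "u < x - a * r + e"
    using Rats_dense_in_real[of "x - a * r" "x - a * r + e"] e by auto
  have "\<bar>(u + a * r) - x\<bar> < e" "\<bar>rat_coeff a (u + a * r) - w\<bar> < e"
    using u r rat_coeff_eq[OF a u(1) r(1)] by auto
  then show "\<exists>x'. \<bar>x' - x\<bar> < e \<and> \<bar>rat_coeff a x' - w\<bar> < e" by blast
qed

(* Density of the graph survives a non-degenerate affine change of the values;
   this is what makes each level set of the construction below dense. *)
lemma dense_graph_affine:
  assumes d: "dense_graph d" and c: "c \<noteq> 0"
  shows "dense_graph (\<lambda>x. c * d x + t)"
  unfolding dense_graph_def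
proof (intro allI impI)
  fix x w e :: real assume e: "e > 0"
  obtain x' where x': "\<bar>x' - x\<bar> < min e (e / \<bar>c\<bar>)" "\<bar>d x' - (w - t) / c\<bar> < min e (e / \<bar>c\<bar>)"
    using dense_graphD[OF d, of "min e (e / \<bar>c\<bar>)"] e c by auto
  have "c * d x' + t - w = c * (d x' - (w - t) / c)"
    using c by (simp add: field_simps)
  then have "\<bar>c * d x' + t - w\<bar> = \<bar>c\<bar> * \<bar>d x' - (w - t) / c\<bar>"
    by (simp add: abs_mult)
  also have "\<dots> < \<bar>c\<bar> * (e / \<bar>c\<bar>)"
    using x'(2) c by (intro mult_strict_left_mono) auto
  finally show "\<exists>x'. \<bar>x' - x\<bar> < e \<and> \<bar>c * d x' + t - w\<bar> < e"
    using x'(1) c by auto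
qed

(* \<real> splits into |B| disjoint blocks, each a singleton or containing [0, \<infinity>):
   one block is the complement of an injective image of the other indices in (-\<infinity>, 0). *)
lemma real_partition:
  fixes B :: "'b set"
  assumes "B \<noteq> {}" "B \<lesssim> (UNIV :: real set)"
  obtains A :: "'b \<Rightarrow> real set" where
    "\<And>b. b \<in> B \<Longrightarrow> {0..} \<subseteq> A b \<or> (\<exists>t. A b = {t})"
    "\<Union>(A ` B) = UNIV"
    "\<And>b b'. b \<in> B \<Longrightarrow> b' \<in> B \<Longrightarrow> b \<noteq> b' \<Longrightarrow> A b \<inter> A b' = {}"
proof -
  obtain f :: "'b \<Rightarrow> real" where "inj_on f B" using assms(2) by (auto simp: lepoll_def)
  then have g_inj: "inj_on (\<lambda>b. - exp (f b)) B" by (auto simp: inj_on_def)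
  obtain b0 where b0: "b0 \<in> B" using assms(1) by blast
  define N where "N = (\<lambda>b. - exp (f b)) ` (B - {b0})"
  have N_neg: "N \<subseteq> {..<0}" by (auto simp: N_def)
  define A where "A b = (if b = b0 then - N else {- exp (f b)})" for b
  show ?thesis
  proof
    show "{0..} \<subseteq> A b \<or> (\<exists>t. A b = {t})" for b
      using N_neg by (auto simp: A_def)
    show "\<Union>(A ` B) = UNIV"
      using b0 by (auto simp: A_def N_def)
    show "A b \<inter> A b' = {}" if "b \<in> B" "b' \<in> B" "b \<noteq> b'" for b b'
      using that g_inj by (auto simp: A_def N_def inj_on_def)
  qed
qed

lemma vimage_partition:
  fixes f :: "'a \<Rightarrow> 'c" and A :: "'b \<Rightarrow> 'c set"
  assumes "surj f"
    and nonempty: "\<And>b. b \<in> B \<Longrightarrow> A b \<noteq> {}"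
    and cover: "\<Union>(A ` B) = UNIV"
    and disjoint: "\<And>b b'. b \<in> B \<Longrightarrow> b' \<in> B \<Longrightarrow> b \<noteq> b' \<Longrightarrow> A b \<inter> A b' = {}"
  shows "(\<lambda>b. f -` A b) ` B \<approx> B" "\<Union>((\<lambda>b. f -` A b) ` B) = UNIV"
    "pairwise disjnt ((\<lambda>b. f -` A b) ` B)" "\<And>b. b \<in> B \<Longrightarrow> f -` A b \<noteq> {}"
proof -
  show ne: "f -` A b \<noteq> {}" if "b \<in> B" for b
    using nonempty[OF that] \<open>surj f\<close> by (metis surj_vimage_empty)
  have disj: "f -` A b \<inter> f -` A b' = {}" if "b \<in> B" "b' \<in> B" "b \<noteq> b'" for b b'
    using disjoint[OF that] by auto
  show "(\<lambda>b. f -` A b) ` B \<approx> B"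
    by (rule inj_on_image_eqpoll_self, rule inj_onI) (metis disj ne Int_absorb)
  show "\<Union>((\<lambda>b. f -` A b) ` B) = UNIV"
    using cover by blast
  show "pairwise disjnt ((\<lambda>b. f -` A b) ` B)"
    unfolding pairwise_def disjnt_def using disj by blast
qed

lemma convex_coord_eq: "convex {q::real^'n. q$i = c}"
  using convex_hyperplane[of "axis i (1::real)" c] by (simp add: inner_axis')

lemma convex_coord_le: "convex {q::real^'n. q$i \<le> c}"
  using convex_halfspace_le[of "axis i (1::real)" c] by (simp add: inner_axis')

lemma convex_coord_ge: "convex {q::real^'n. c \<le> q$i}"
  using convex_halfspace_ge[of c "axis i (1::real)"] by (simp add: inner_axis')

lemma convex_coord_gt: "convex {q::real^'n. c < q$i}"
  using convex_halfspace_gt[of c "axis i (1::real)"] by (simp add: inner_axis')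

lemma convex_coord_affine: "convex {q::real^'n. q$j = a * q$i + c}"
  using convex_hyperplane[of "axis j (1::real) - a *\<^sub>R axis i 1" c]
  by (simp add: inner_axis' algebra_simps)

lemma path_component_via_convex:
  fixes C :: "'a::real_normed_vector set"
  assumes "convex C" "C \<subseteq> S" "x \<in> C" "y \<in> C"
  shows "path_component S x y"
proof -
  have "path_component C x y"
    using assms(1,3,4) convex_imp_path_connected path_connected_component by blast
  then show ?thesis using assms(2) by (rule path_component_of_subset[rotated])
qed

lemma arcwise_connected_iff_path_connected:
  fixes S :: "'a::{complete_space,real_normed_vector} set"
  shows "arcwise_connected S \<longleftrightarrow> path_connected S"
  unfolding arcwise_connected_def path_connected_arcwise ..

lemma three_distinct_indices:
  assumes "CARD('n::finite) \<ge> 3"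
  obtains i1 i2 i3 :: "'n::finite" where "i1 \<noteq> i2" "i1 \<noteq> i3" "i2 \<noteq> i3"
proof -
  have "Suc (Suc (Suc 0)) \<le> card (UNIV::'n set)" using assms by simp
  then show ?thesis using that unfolding card_le_Suc_iff by (metis (full_types) insert_iff)
qed

(* The construction lives in three distinct coordinates x = i1, y = i2, z = i3
   of \<real>^'n, for a function d with dense graph and d 0 = 0. *)
locale dense_graph_levels =
  fixes d :: "real \<Rightarrow> real" and i1 i2 i3 :: "'n::finite"
  assumes d_0: "d 0 = 0" and d_dense: "dense_graph d"
    and distinct: "i1 \<noteq> i2" "i1 \<noteq> i3" "i2 \<noteq> i3"
begin

(* Linear in y on y \<le> 0 and on y > 0, vanishing at y = 0 and at y = 1; the jump
   at y = 0 separates the two sheets of each level set. *)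
definition height :: "real \<Rightarrow> real \<Rightarrow> real" where
  "height x y = (if y \<le> 0 then y * d x else (y - 1) * d x)"

definition phi :: "real^'n \<Rightarrow> real" where
  "phi p = p$i3 - height (p$i1) (p$i2)"

abbreviation level :: "real \<Rightarrow> (real^'n) set" where
  "level t \<equiv> phi -` {t}"

definition pt :: "real^'n \<Rightarrow> real \<Rightarrow> real \<Rightarrow> real \<Rightarrow> real^'n" where
  "pt p x y z = (\<chi> j. if j = i1 then x else if j = i2 then y else if j = i3 then z else p$j)"

definition base :: "real \<Rightarrow> real^'n" where
  "base t = pt 0 0 0 t"

lemma pt_nth [simp]: "pt p x y z $ i1 = x" "pt p x y z $ i2 = y" "pt p x y z $ i3 = z"
  using distinct by (auto simp: pt_def)

lemma height_simps [simp]: "height x 0 = 0" "height x 1 = 0" "height 0 y = 0"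
  by (auto simp: height_def d_0)

lemma phi_pt [simp]: "phi (pt p x y z) = z - height x y"
  by (simp add: phi_def)

lemma phi_base [simp]: "phi (base t) = t"
  by (simp add: base_def)

lemma surj_phi: "surj phi"
  by (metis phi_base surjI)

lemma dist_pt: "dist (pt p x y z) p \<le> \<bar>x - p$i1\<bar> + \<bar>y - p$i2\<bar> + \<bar>z - p$i3\<bar>"
proof -
  have "pt p x y z - p = (x - p$i1) *\<^sub>R axis i1 1 + (y - p$i2) *\<^sub>R axis i2 1 + (z - p$i3) *\<^sub>R axis i3 1"
    using distinct by (auto simp: vec_eq_iff pt_def axis_def)
  then have "dist (pt p x y z) p
      = norm ((x - p$i1) *\<^sub>R axis i1 (1::real) + (y - p$i2) *\<^sub>R axis i2 1 + (z - p$i3) *\<^sub>R axis i3 1)"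
    by (simp add: dist_norm)
  also have "\<dots> \<le> \<bar>x - p$i1\<bar> + \<bar>y - p$i2\<bar> + \<bar>z - p$i3\<bar>"
    by (rule order_trans[OF norm_triangle_ineq])
       (auto intro!: add_mono order_trans[OF norm_triangle_ineq])
  finally show ?thesis .
qed

lemma slice_y0: "{q. q$i2 = 0} \<inter> {q. q$i3 = t} \<subseteq> level t"
  by (auto simp: phi_def)

lemma slice_y1: "{q. q$i2 = 1} \<inter> {q. q$i3 = t} \<subseteq> level t"
  by (auto simp: phi_def)

lemma slice_x0: "{q. q$i1 = 0} \<inter> {q. q$i3 = t} \<subseteq> level t"
  by (auto simp: phi_def)

lemma lower_sheet:
  "{q. q$i1 = x} \<inter> {q. q$i2 \<le> 0} \<inter> {q. q$i3 = d x * q$i2 + t} \<subseteq> level t"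
  by (auto simp: phi_def height_def)

lemma upper_sheet:
  "{q. q$i1 = x} \<inter> {q. 0 < q$i2} \<inter> {q. q$i3 = d x * q$i2 + (t - d x)} \<subseteq> level t"
  by (auto simp: phi_def height_def algebra_simps)

(* Continuing the lower sheet across y = 0 lands in the level t + d x: this convex
   set connects different level sets. *)
lemma bridge:
  "{q. q$i1 = x} \<inter> {q. 0 \<le> q$i2} \<inter> {q. q$i3 = d x * q$i2 + t} \<subseteq> level t \<union> level (t + d x)"
  by (auto simp: phi_def height_def algebra_simps)

(* Every point of a level set is joined to its base point: along its sheet to the
   slice y = 0 (resp. y = 1), then through the slices to base t. *)
lemma level_component_base:
  assumes p: "p \<in> level t"
  shows "path_component (level t) p (base t)"
proof (cases "p$i2 \<le> 0")
  case True
  let ?p0 = "pt p (p$i1) 0 t"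
  have "path_component (level t) p ?p0"
    by (rule path_component_via_convex[OF convex_Int[OF convex_Int[OF convex_coord_eq convex_coord_le]
          convex_coord_affine] lower_sheet[of "p$i1" t]])
       (use True p in \<open>auto simp: phi_def height_def\<close>)
  moreover have "path_component (level t) ?p0 (base t)"
    by (rule path_component_via_convex[OF _ slice_y0[of t]])
       (auto simp: base_def convex_Int convex_coord_eq)
  ultimately show ?thesis by (rule path_component_trans)
next
  case False
  let ?p1 = "pt p (p$i1) 1 t"
  have "path_component (level t) p ?p1"
    by (rule path_component_via_convex[OF convex_Int[OF convex_Int[OF convex_coord_eq convex_coord_gt]
          convex_coord_affine] upper_sheet[of "p$i1" t]])
       (use False p in \<open>auto simp: phi_def height_def algebra_simps\<close>)
  moreover have "path_component (level t) ?p1 (pt 0 0 1 t)"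
    by (rule path_component_via_convex[OF _ slice_y1[of t]])
       (auto simp: convex_Int convex_coord_eq)
  moreover have "path_component (level t) (pt 0 0 1 t) (base t)"
    by (rule path_component_via_convex[OF _ slice_x0[of t]])
       (auto simp: base_def convex_Int convex_coord_eq)
  ultimately show ?thesis by (meson path_component_trans)
qed

lemma component_base_in_vimage:
  "phi p \<in> A \<Longrightarrow> path_component (phi -` A) p (base (phi p))"
  by (rule path_component_of_subset[OF _ level_component_base]) auto

lemma level_path_connected: "path_connected (level t)"
  unfolding path_connected_component
  by (meson level_component_base path_component_sym path_component_trans)

(* Near p, fix y \<notin> {0, 1}: then height x y = c * d x with c \<noteq> 0, and the dense
   graph of x \<mapsto> c * d x + t provides a point of the level set close to p. *)
lemma level_dense: "closure (level t) = UNIV"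
proof -
  have "\<exists>q\<in>level t. dist q p < e" if e: "e > 0" for p e
  proof -
    define y where "y = (if p$i2 = 0 \<or> p$i2 = 1 then p$i2 + min (e/3) (1/2) / 2 else p$i2)"
    have y: "\<bar>y - p$i2\<bar> < e/3" "y \<noteq> 0" "y \<noteq> 1" using e by (auto simp: y_def)
    define c where "c = (if y \<le> 0 then y else y - 1)"
    have c: "c \<noteq> 0" using y by (auto simp: c_def)
    have on_level: "pt p x y (c * d x + t) \<in> level t" for x
      by (simp add: height_def c_def)
    obtain x where x: "\<bar>x - p$i1\<bar> < e/3" "\<bar>c * d x + t - p$i3\<bar> < e/3"
      using dense_graphD[OF dense_graph_affine[OF d_dense c, of t], of "e/3" "p$i1" "p$i3"] e by auto
    have "dist (pt p x y (c * d x + t)) p < e"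
      using dist_pt[of p x y "c * d x + t"] x y by linarith
    then show ?thesis using on_level by blast
  qed
  then show ?thesis by (auto simp: closure_approachable)
qed

(* If A \<supseteq> [0, \<infinity>), all base points of levels in A are connected to base 0 inside
   phi^-1(A): directly along the half-line x = 0, z \<ge> 0 when t \<ge> 0, and for t < 0
   first across a bridge into a level s = t + d x \<ge> 0. *)
lemma base_component_base0:
  assumes A: "{0..} \<subseteq> A" and t: "t \<in> A"
  shows "path_component (phi -` A) (base t) (base 0)"
proof -
  have half_plane: "{q. q$i1 = 0} \<inter> {q. 0 \<le> q$i3} \<subseteq> phi -` A"
    using A by (auto simp: phi_def)
  have nonneg: "path_component (phi -` A) (base s) (base 0)" if "s \<ge> 0" for s
    by (rule path_component_via_convex[OF _ half_plane])
       (use that in \<open>auto simp: base_def convex_Int convex_coord_eq convex_coord_ge\<close>)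
  show ?thesis
  proof (cases "t \<ge> 0")
    case True then show ?thesis by (rule nonneg)
  next
    case False
    obtain x where x: "\<bar>d x - (1 - t)\<bar> < 1"
      using dense_graphD[OF d_dense, of 1] by auto
    define s where "s = t + d x"
    have s: "s \<ge> 0" "s \<in> A" using x A by (auto simp: s_def)
    have "path_component (phi -` A) (base t) (pt 0 x 0 t)"
      by (rule path_component_via_convex[OF _ order_trans[OF slice_y0[of t]]])
         (use t in \<open>auto simp: base_def convex_Int convex_coord_eq\<close>)
    moreover have "path_component (phi -` A) (pt 0 x 0 t) (pt 0 x 1 s)"
      by (rule path_component_via_convex[OF _ order_trans[OF bridge[of x t]]])
         (use t s in \<open>auto simp: s_def convex_Int convex_coord_eq convex_coord_ge convex_coord_affine\<close>)
    moreover have "path_component (phi -` A) (pt 0 x 1 s) (base s)"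
      using component_base_in_vimage[of "pt 0 x 1 s" A] s(2) by simp
    ultimately show ?thesis using nonneg[OF s(1)] by (meson path_component_trans)
  qed
qed

lemma vimage_path_connected:
  assumes A: "{0..} \<subseteq> A"
  shows "path_connected (phi -` A)"
proof -
  have "path_component (phi -` A) p (base 0)" if p: "p \<in> phi -` A" for p
    using component_base_in_vimage[of p A] base_component_base0[OF A, of "phi p"] p
    by (auto intro: path_component_trans)
  then show ?thesis unfolding path_connected_component
    by (meson path_component_sym path_component_trans)
qed

end

(* The blocks are the preimages under phi of a partition of \<real> into singletons and
   one set containing [0, \<infinity>). *)
theorem corollary2:
  fixes B :: "'b set"
  assumes "CARD('n::finite) \<ge> 3"
    and "B \<noteq> {}"
    and "B \<lesssim> (UNIV :: real set)"
  shows "\<exists>\<P> :: (real ^ 'n) set set.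
           \<P> \<approx> B \<and> \<Union>\<P> = UNIV \<and> pairwise disjnt \<P> \<and>
           (\<forall>S\<in>\<P>. S \<noteq> {} \<and> arcwise_connected S \<and> closure S = UNIV)"
proof -
  obtain i1 i2 i3 :: 'n where "i1 \<noteq> i2" "i1 \<noteq> i3" "i2 \<noteq> i3"
    using three_distinct_indices[OF assms(1)] by blast
  moreover obtain a :: real where "a \<notin> \<rat>" using irrational_exists by blast
  ultimately interpret dense_graph_levels "rat_coeff a" i1 i2 i3
    using rat_coeff_0 dense_graph_rat_coeff by unfold_locales auto
  obtain A :: "'b \<Rightarrow> real set"
    where A_shape: "\<And>b. b \<in> B \<Longrightarrow> {0..} \<subseteq> A b \<or> (\<exists>t. A b = {t})"
    and A_cover: "\<Union>(A ` B) = UNIV"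
    and A_disjoint: "\<And>b b'. b \<in> B \<Longrightarrow> b' \<in> B \<Longrightarrow> b \<noteq> b' \<Longrightarrow> A b \<inter> A b' = {}"
    using real_partition[OF assms(2,3)] by blast
  have A_nonempty: "A b \<noteq> {}" if "b \<in> B" for b
    using A_shape[OF that] by auto
  have block: "closure (phi -` A b) = UNIV \<and> path_connected (phi -` A b)" if b: "b \<in> B" for b
  proof
    obtain t where "t \<in> A b" using A_nonempty[OF b] by blast
    then have "closure (level t) \<subseteq> closure (phi -` A b)" by (intro closure_mono) auto
    then show "closure (phi -` A b) = UNIV" using level_dense by auto
    show "path_connected (phi -` A b)"
      using A_shape[OF b] vimage_path_connected level_path_connected by auto
  qed
  show ?thesis
    using vimage_partition[OF surj_phi A_nonempty A_cover A_disjoint] block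
    by (intro exI[of _ "(\<lambda>b. phi -` A b) ` B"]) (auto simp: arcwise_connected_iff_path_connected)
qed

end
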